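(* Let $K, L, N$ be positive integers. Consider the $K$-user SIMO broadcast channel with a single transmit antenna, $N$ antennas at each receiver, symbol extension factor $L$, and no CSIT, as described in the context. Then the maximum achievable SpAC is $\frac{L-K+1}{L}$.
   Context: Model: one single-antenna transmitter and $K$ receivers with $N$ antennas each. Over $L$ channel uses, receiver $i$ observes $\mathbf{y}_i=\mathbf{H}_{i,i}\sum_{j=1}^K\mathbf{Q}_j\mathbf{x}_j+\mathbf{n}_i\in\mathbb{C}^{NL}$, where $\mathbf{H}_{i,i}\in\mathbb{C}^{NL\times L}$ is block diagonal with $L$ diagonal blocks $\mathbf{h}_{i,i}(t)\in\mathbb{C}^{N\times 1}$, $\mathbf{x}_j\in\mathbb{C}^d$ is the finite-alphabet symbol vector for receiver $j$, $\mathbf{Q}_j\in\mathbb{C}^{L\times d}$ its precoder (rank $d$), and $\mathbf{n}_i$ Gaussian noise. No CSIT: the precoders are fixed and independent of the channel coefficients. At receiver $i$, the desired subspace is $\mathcal{S}_i=\mathrm{span}(\mathbf{H}_{i,i}\mathbf{Q}_i)$ and the interference subspace is $\mathcal{I}_i=\sum_{j\ne i}\mathrm{span}(\mathbf{H}_{i,i}\mathbf{Q}_j)$. A value $d$ is achievable if there exist channel-independent precoders such that, for almost every realization of the channel coefficients, $\mathcal{S}_i\not\subseteq\mathcal{I}_i$ for every receiver $i$. The SpAC is $d/L$, and the maximum achievable SpAC is the maximum of $d/L$ over achievable $d$. *)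

theory Defs
  imports "HOL-Analysis.Analysis" "Jordan_Normal_Form.DL_Rank"
begin

text \<open>Channel coefficients: h (i, t, a) is the coefficient from the single transmit
  antenna to antenna a (a < N) of receiver i (i < K) in channel use t (t < L).\<close>

definition chan_idx :: "nat \<Rightarrow> nat \<Rightarrow> nat \<Rightarrow> (nat \<times> nat \<times> nat) set" where
  "chan_idx K L N = {(i, t, a). i < K \<and> t < L \<and> a < N}"

text \<open>The block-diagonal (N L) x L channel matrix H_{i,i} of receiver i: its t-th diagonal
  block is the column h_{i,i}(t) in C^N, occupying rows t N, ..., t N + N - 1 of column t.\<close>

definition chan_mat :: "nat \<Rightarrow> nat \<Rightarrow> ((nat \<times> nat \<times> nat) \<Rightarrow> complex) \<Rightarrow> nat \<Rightarrow> complex mat" where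
  "chan_mat N L h i = mat (N * L) L (\<lambda>(r, c). if r div N = c then h (i, c, r mod N) else 0)"

definition desired_sub ::
  "nat \<Rightarrow> nat \<Rightarrow> ((nat \<times> nat \<times> nat) \<Rightarrow> complex) \<Rightarrow> (nat \<Rightarrow> complex mat) \<Rightarrow> nat \<Rightarrow> complex vec set" where
  "desired_sub N L h Q i = vec_space.col_space (N * L) (chan_mat N L h i * Q i)"

definition interf_sub ::
  "nat \<Rightarrow> nat \<Rightarrow> nat \<Rightarrow> ((nat \<times> nat \<times> nat) \<Rightarrow> complex) \<Rightarrow> (nat \<Rightarrow> complex mat) \<Rightarrow> nat \<Rightarrow> complex vec set" where
  "interf_sub K N L h Q i =
     module.span class_ring (module_vec TYPE(complex) (N * L)) (\<Union>j\<in>{j. j < K \<and> j \<noteq> i}. set (cols (chan_mat N L h i * Q j)))"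

definition achievable :: "nat \<Rightarrow> nat \<Rightarrow> nat \<Rightarrow> nat \<Rightarrow> bool" where
  "achievable K N L d \<longleftrightarrow>
     (\<exists>Q :: nat \<Rightarrow> complex mat.
        (\<forall>j < K. Q j \<in> carrier_mat L d \<and> vec_space.rank L (Q j) = d) \<and>
        (AE h in (\<Pi>\<^sub>M x\<in>chan_idx K L N. (lborel :: complex measure)).
            \<forall>i < K. \<not> desired_sub N L h Q i \<subseteq> interf_sub K N L h Q i))"

end

theory Submission
  imports Defs
begin

text \<open>Upper bound: fix one channel realization for which every desired subspace escapes
  its interference subspace. Since H_{i,i} maps the span of the columns of the other
  precoders into I_i, some column u_i of Q_i lies outside the span of the columns of all
  Q_j with j \<noteq> i. The d columns of Q_1 together with u_2, ..., u_K are then linearly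
  independent in C^L, so d + K - 1 \<le> L.

  Lower bound: all receivers share the first L - K channel uses, and receiver i additionally
  gets the private channel use L - K + i. The interference at receiver i vanishes on the
  first antenna in that channel use, while the desired signal does not as soon as
  h_{i,i}(L - K + i) has a nonzero first entry, which holds almost surely.\<close>

context vec_space
begin

lemma rank_le_card_set_cols:
  assumes "A \<in> carrier_mat n nc"
  shows "rank A \<le> card (set (cols A))"
proof -
  obtain S where S: "maximal S (\<lambda>T. T \<subseteq> set (cols A) \<and> lin_indpt T)"
    using maximal_exists[of "\<lambda>T. T \<subseteq> set (cols A) \<and> lin_indpt T" "card (set (cols A))" "{}"]
    by (meson List.finite_set card_mono empty_iff empty_subsetI finite_lin_indpt2 rev_finite_subset)
  then show ?thesis
    using rank_card_indpt[OF assms S] by (simp add: card_mono maximal_def)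
qed

lemma full_rank_lin_indpt_cols:
  assumes A: "A \<in> carrier_mat n nc" and rank: "rank A = nc"
  shows "lin_indpt (set (cols A))" "card (set (cols A)) = nc"
proof -
  have "card (set (cols A)) \<le> nc"
    using card_length[of "cols A"] A by simp
  with rank_le_card_set_cols[OF A] rank show card: "card (set (cols A)) = nc"
    by simp
  then have "distinct (cols A)"
    using A by (intro card_distinct) simp
  then show "lin_indpt (set (cols A))"
    by (rule full_rank_lin_indpt[OF A rank])
qed

lemma submodule_coordinate_zero:
  assumes "r < n"
  shows "submodule class_ring {w \<in> carrier_vec n. w $ r = 0} V"
  unfolding submodule_def
proof (intro conjI allI impI ballI)
  show "module class_ring V"
    by (rule module_axioms)
qed (use assms in auto)

lemma span_subset_coordinate_zero:
  assumes "r < n" "S \<subseteq> {w \<in> carrier_vec n. w $ r = 0}"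
  shows "span S \<subseteq> {w \<in> carrier_vec n. w $ r = 0}"
  by (rule span_is_subset[OF assms(2) submodule_coordinate_zero[OF assms(1)]])

lemma submodule_preimage_mult_mat_vec:
  assumes A: "A \<in> carrier_mat m n"
    and U: "submodule class_ring U (module_vec TYPE('a) m)"
  shows "submodule class_ring {v \<in> carrier_vec n. A *\<^sub>v v \<in> U} V"
proof -
  interpret U: submodule class_ring U "module_vec TYPE('a) m"
    by (rule U)
  have "A *\<^sub>v 0\<^sub>v n = 0\<^sub>v m"
    using A by (intro eq_vecI) auto
  then show ?thesis
    unfolding submodule_def
  proof (intro conjI allI impI ballI)
    show "module class_ring V"
      by (rule module_axioms)
  next
    fix v w assume v: "v \<in> {v \<in> carrier_vec n. A *\<^sub>v v \<in> U}" and w: "w \<in> {v \<in> carrier_vec n. A *\<^sub>v v \<in> U}"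
    have "A *\<^sub>v v + A *\<^sub>v w \<in> U"
      using U.m_closed[of "A *\<^sub>v v" "A *\<^sub>v w"] v w by (simp add: module_vec_simps)
    with v w show "v \<oplus>\<^bsub>V\<^esub> w \<in> {v \<in> carrier_vec n. A *\<^sub>v v \<in> U}"
      by (simp add: mult_add_distrib_mat_vec[OF A])
  next
    fix c v assume "v \<in> {v \<in> carrier_vec n. A *\<^sub>v v \<in> U}"
    then show "c \<odot>\<^bsub>V\<^esub> v \<in> {v \<in> carrier_vec n. A *\<^sub>v v \<in> U}"
      using U.smult_closed[of c "A *\<^sub>v v"]
      by (simp add: mult_mat_vec[OF A] module_vec_simps class_ring_simps)
  qed (use U.zero_closed in \<open>auto simp: module_vec_simps\<close>)
qed

lemma mult_mat_vec_span_subset: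
  assumes A: "A \<in> carrier_mat m n"
    and U: "submodule class_ring U (module_vec TYPE('a) m)"
    and S: "S \<subseteq> carrier_vec n" "(\<lambda>v. A *\<^sub>v v) ` S \<subseteq> U"
  shows "(\<lambda>v. A *\<^sub>v v) ` span S \<subseteq> U"
proof -
  have "span S \<subseteq> {v \<in> carrier_vec n. A *\<^sub>v v \<in> U}"
    using S by (intro span_is_subset submodule_preimage_mult_mat_vec[OF A U]) auto
  then show ?thesis
    by auto
qed

lemma lin_indpt_extend_by_private_vectors:
  fixes C :: "nat \<Rightarrow> 'a vec set" and u :: "nat \<Rightarrow> 'a vec"
  assumes C: "\<And>j. j < K \<Longrightarrow> C j \<subseteq> carrier_vec n"
    and B: "B \<subseteq> C 0" "lin_indpt B" "finite B"
    and u_in: "\<And>k. k < K \<Longrightarrow> u k \<in> span (C k)"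
    and u_out: "\<And>k. k < K \<Longrightarrow> u k \<notin> span (\<Union>j\<in>{j. j < K \<and> j \<noteq> k}. C j)"
    and m: "m < K"
  shows "lin_indpt (B \<union> u ` {1..m}) \<and> card (B \<union> u ` {1..m}) = card B + m"
  using m
proof (induction m)
  case 0
  then show ?case
    using B by simp
next
  case (Suc m)
  let ?T = "B \<union> u ` {1..m}"
  let ?G = "\<Union>j\<in>{j. j < K \<and> j \<noteq> Suc m}. C j"
  have IH: "lin_indpt ?T" "card ?T = card B + m"
    using Suc.IH Suc.prems by simp_all
  have G: "?G \<subseteq> carrier_vec n"
    using C by blast
  have u_carrier: "u k \<in> carrier_vec n" if "k < K" for k
    using u_in[OF that] span_is_subset2[OF C[OF that]] by blast
  have "B \<subseteq> carrier_vec n"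
    using B(1) C[of 0] Suc.prems by simp
  moreover have "u ` {1..m} \<subseteq> carrier_vec n"
    using Suc.prems by (intro image_subsetI u_carrier) simp
  ultimately have T: "?T \<subseteq> carrier_vec n"
    by (rule Un_least)
  have C_G: "C j \<subseteq> span ?G" if "j < K" "j \<noteq> Suc m" for j
    using that in_own_span[OF G] by blast
  have "B \<subseteq> span ?G"
    using B(1) C_G[of 0] Suc.prems by simp
  moreover have "u k \<in> span ?G" if "k \<in> {1..m}" for k
  proof -
    have k: "k < K" "k \<noteq> Suc m"
      using that Suc.prems by auto
    have "span (C k) \<subseteq> span ?G"
      by (rule span_is_subset[OF C_G[OF k] span_is_submodule[OF G]])
    then show ?thesis
      using u_in[OF k(1)] by blast
  qed
  ultimately have "?T \<subseteq> span ?G"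
    by blast
  then have "span ?T \<subseteq> span ?G"
    by (rule span_is_subset[OF _ span_is_submodule[OF G]])
  then have not_in_span: "u (Suc m) \<notin> span ?T"
    using u_out[OF Suc.prems] by blast
  then have not_in: "u (Suc m) \<notin> ?T"
    using in_own_span[OF T] by blast
  have "lin_indpt (?T \<union> {u (Suc m)})"
    using lin_dep_iff_in_span[OF T IH(1) u_carrier[OF Suc.prems] not_in] not_in_span by simp
  moreover have "B \<union> u ` {1..Suc m} = insert (u (Suc m)) ?T"
    by (auto simp: atLeastAtMostSuc_conv)
  ultimately show ?case
    using IH(2) not_in B(3) by simp
qed

lemma private_directions_dim_bound:
  fixes Q :: "nat \<Rightarrow> 'a mat"
  assumes K: "0 < K"
    and Q: "\<And>j. j < K \<Longrightarrow> dim_row (Q j) = n"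
    and rank: "rank (Q 0) = dim_col (Q 0)"
    and private_dir: "\<And>k. k < K \<Longrightarrow>
      \<exists>u \<in> span (set (cols (Q k))). u \<notin> span (\<Union>j\<in>{j. j < K \<and> j \<noteq> k}. set (cols (Q j)))"
  shows "dim_col (Q 0) + K - 1 \<le> n"
proof -
  have "\<forall>k. \<exists>u. k < K \<longrightarrow>
      u \<in> span (set (cols (Q k))) \<and> u \<notin> span (\<Union>j\<in>{j. j < K \<and> j \<noteq> k}. set (cols (Q j)))"
    using private_dir by blast
  then obtain u where u: "\<forall>k. k < K \<longrightarrow>
      u k \<in> span (set (cols (Q k))) \<and> u k \<notin> span (\<Union>j\<in>{j. j < K \<and> j \<noteq> k}. set (cols (Q j)))"
    by (rule choice[THEN exE])
  let ?B = "set (cols (Q 0))"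
  let ?T = "?B \<union> u ` {1..K - 1}"
  have C: "set (cols (Q j)) \<subseteq> carrier_vec n" if "j < K" for j
    using Q[OF that] cols_dim by blast
  have Q0: "Q 0 \<in> carrier_mat n (dim_col (Q 0))"
    using Q[OF K] by auto
  have "lin_indpt ?T \<and> card ?T = card ?B + (K - 1)"
  proof (rule lin_indpt_extend_by_private_vectors[where C = "\<lambda>j. set (cols (Q j))", OF C])
    show "lin_indpt ?B"
      by (rule full_rank_lin_indpt_cols(1)[OF Q0 rank])
  qed (use u K in auto)
  then have T: "lin_indpt ?T" "card ?T = dim_col (Q 0) + (K - 1)"
    using full_rank_lin_indpt_cols(2)[OF Q0 rank] by auto
  have "u ` {1..K - 1} \<subseteq> carrier_vec n"
  proof (rule image_subsetI)
    fix k assume "k \<in> {1..K - 1}"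
    then have "k < K"
      by auto
    then show "u k \<in> carrier_vec n"
      using u span_is_subset2[OF C] by blast
  qed
  then have "?T \<subseteq> carrier_vec n"
    using C[OF K] by (rule Un_least[rotated])
  then have "card ?T \<le> n"
    using li_le_dim(2)[OF fin_dim _ T(1)] dim_is_n by simp
  then show ?thesis
    using T(2) K by simp
qed

end

lemma AE_PiM_lborel_coordinate_neq:
  fixes c :: "'b::euclidean_space"
  assumes I: "finite I" and x: "x \<in> I"
  shows "AE h in (\<Pi>\<^sub>M i\<in>I. (lborel :: 'b measure)). h x \<noteq> c"
proof -
  let ?M = "\<Pi>\<^sub>M i\<in>I. (lborel :: 'b measure)"
  let ?A = "\<lambda>i. if i = x then {c} else UNIV"
  interpret product_sigma_finite "\<lambda>_. (lborel :: 'b measure)"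
    by unfold_locales
  have "emeasure ?M (Pi\<^sub>E I ?A) = (\<Prod>i\<in>I. emeasure lborel (?A i))"
    by (rule emeasure_PiM[OF I]) simp
  also have "\<dots> = 0"
    using I x by (intro prod_zero) (auto intro!: bexI[of _ x])
  finally have "Pi\<^sub>E I ?A \<in> null_sets ?M"
    using sets_PiM_I_finite[OF I, of ?A "\<lambda>_. lborel"] by (simp add: null_sets_def)
  then show ?thesis
    by (rule AE_I') (auto simp: space_PiM PiE_def Pi_def)
qed

lemma ae_filter_PiM_lborel_neq_bot:
  assumes I: "finite I"
  shows "ae_filter (\<Pi>\<^sub>M i\<in>I. (lborel :: 'b::euclidean_space measure)) \<noteq> bot"
proof -
  let ?M = "\<Pi>\<^sub>M i\<in>I. (lborel :: 'b measure)"
  interpret product_sigma_finite "\<lambda>_. (lborel :: 'b measure)"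
    by unfold_locales
  have "emeasure ?M (space ?M) = emeasure ?M (Pi\<^sub>E I (\<lambda>_. UNIV))"
    by (simp add: space_PiM)
  also have "\<dots> = (\<Prod>i\<in>I. emeasure (lborel :: 'b measure) UNIV)"
    by (rule emeasure_PiM[OF I]) simp
  also have "\<dots> = \<infinity> ^ card I"
    by simp
  finally show ?thesis
    by (simp add: ae_filter_eq_bot_iff)
qed

lemma set_cols_mult:
  assumes A: "A \<in> carrier_mat m n" and B: "B \<in> carrier_mat n k"
  shows "set (cols (A * B)) = (\<lambda>v. A *\<^sub>v v) ` set (cols B)"
proof -
  have "set (cols (A * B)) = (\<lambda>c. col (A * B) c) ` {0..<k}"
    using A B by (simp add: cols_def)
  also have "\<dots> = (\<lambda>c. A *\<^sub>v col B c) ` {0..<k}"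
    using A B by (intro image_cong) auto
  also have "\<dots> = (\<lambda>v. A *\<^sub>v v) ` set (cols B)"
    using B by (simp add: cols_def image_image)
  finally show ?thesis .
qed

lemma finite_chan_idx: "finite (chan_idx K L N)"
proof -
  have "chan_idx K L N \<subseteq> {..<K} \<times> {..<L} \<times> {..<N}"
    unfolding chan_idx_def by auto
  then show ?thesis
    by (rule finite_subset) auto
qed

lemma chan_mat_carrier [simp]: "chan_mat N L h i \<in> carrier_mat (N * L) L"
  unfolding chan_mat_def by simp

lemma dim_chan_mat [simp]: "dim_row (chan_mat N L h i) = N * L" "dim_col (chan_mat N L h i) = L"
  unfolding chan_mat_def by simp_all

lemma chan_mat_mult_vec_carrier [simp]: "chan_mat N L h i *\<^sub>v v \<in> carrier_vec (N * L)"
  unfolding carrier_vec_def chan_mat_def by simp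

lemma chan_mat_mult_unit_vec_index:
  assumes "t < L" "r < N * L"
  shows "(chan_mat N L h i *\<^sub>v unit_vec L t) $ r = (if r div N = t then h (i, t, r mod N) else 0)"
proof -
  have "(chan_mat N L h i *\<^sub>v unit_vec L t) $ r = row (chan_mat N L h i) r \<bullet> unit_vec L t"
    using assms by simp
  also have "\<dots> = row (chan_mat N L h i) r $ t"
    using assms by simp
  also have "\<dots> = chan_mat N L h i $$ (r, t)"
    using assms by simp
  also have "\<dots> = (if r div N = t then h (i, t, r mod N) else 0)"
    unfolding chan_mat_def using assms by simp
  finally show ?thesis .
qed

lemma desired_sub_eq_span:
  assumes "Q i \<in> carrier_mat L d"
  shows "desired_sub N L h Q i = module.span class_ring (module_vec TYPE(complex) (N * L)) ((\<lambda>v. chan_mat N L h i *\<^sub>v v) ` set (cols (Q i)))"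
  unfolding desired_sub_def vec_space.col_space_def set_cols_mult[OF chan_mat_carrier assms] ..

lemma interf_sub_eq_span:
  assumes "\<And>j. j < K \<Longrightarrow> Q j \<in> carrier_mat L d"
  shows "interf_sub K N L h Q i =
    module.span class_ring (module_vec TYPE(complex) (N * L)) ((\<lambda>v. chan_mat N L h i *\<^sub>v v) ` (\<Union>j\<in>{j. j < K \<and> j \<noteq> i}. set (cols (Q j))))"
proof -
  have "set (cols (chan_mat N L h i * Q j)) = (\<lambda>v. chan_mat N L h i *\<^sub>v v) ` set (cols (Q j))"
    if "j \<in> {j. j < K \<and> j \<noteq> i}" for j
    using that by (intro set_cols_mult[OF chan_mat_carrier assms]) simp
  then have "(\<Union>j\<in>{j. j < K \<and> j \<noteq> i}. set (cols (chan_mat N L h i * Q j))) =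
      (\<Union>j\<in>{j. j < K \<and> j \<noteq> i}. (\<lambda>v. chan_mat N L h i *\<^sub>v v) ` set (cols (Q j)))"
    by (rule SUP_cong[OF refl])
  then show ?thesis
    unfolding interf_sub_def image_UN by (rule arg_cong)
qed

lemma escape_imp_private_column:
  fixes Q :: "nat \<Rightarrow> complex mat"
  assumes Q: "\<And>j. j < K \<Longrightarrow> Q j \<in> carrier_mat L d" and i: "i < K"
    and escape: "\<not> desired_sub N L h Q i \<subseteq> interf_sub K N L h Q i"
  obtains u where "u \<in> set (cols (Q i))"
    "u \<notin> module.span class_ring (module_vec TYPE(complex) L) (\<Union>j\<in>{j. j < K \<and> j \<noteq> i}. set (cols (Q j)))"
proof -
  interpret V: vec_space "TYPE(complex)" L .
  interpret W: vec_space "TYPE(complex)" "N * L" .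
  let ?H = "\<lambda>v. chan_mat N L h i *\<^sub>v v"
  let ?G = "\<Union>j\<in>{j. j < K \<and> j \<noteq> i}. set (cols (Q j))"
  have G: "?G \<subseteq> carrier_vec L"
    using Q cols_dim by fastforce
  have HG: "?H ` ?G \<subseteq> carrier_vec (N * L)"
    by (rule image_subsetI) simp
  have I: "interf_sub K N L h Q i = W.span (?H ` ?G)"
    by (rule interf_sub_eq_span[OF Q])
  have I_sub: "submodule class_ring (interf_sub K N L h Q i) W.V"
    unfolding I by (rule W.span_is_submodule[OF HG])
  have "\<not> ?H ` set (cols (Q i)) \<subseteq> interf_sub K N L h Q i"
  proof
    assume "?H ` set (cols (Q i)) \<subseteq> interf_sub K N L h Q i"
    then have "W.span (?H ` set (cols (Q i))) \<subseteq> interf_sub K N L h Q i"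
      by (rule W.span_is_subset[OF _ I_sub])
    with escape show False
      unfolding desired_sub_eq_span[where Q = Q and i = i, OF Q[OF i]] by simp
  qed
  then obtain u where u: "u \<in> set (cols (Q i))" and out: "?H u \<notin> interf_sub K N L h Q i"
    unfolding image_subset_iff by blast
  have "?H ` ?G \<subseteq> interf_sub K N L h Q i"
    unfolding I by (rule W.in_own_span[OF HG])
  then have "?H ` V.span ?G \<subseteq> interf_sub K N L h Q i"
    by (rule V.mult_mat_vec_span_subset[OF chan_mat_carrier I_sub G])
  then have "u \<notin> V.span ?G"
    using out by (auto dest: imageI[of _ _ ?H])
  with u show ?thesis
    by (rule that)
qed

lemma achievable_imp_le:
  assumes K: "0 < K" and ach: "achievable K N L d"
  shows "d + K - 1 \<le> L"
proof -
  interpret V: vec_space "TYPE(complex)" L .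
  obtain Q :: "nat \<Rightarrow> complex mat" where
    Q: "\<And>j. j < K \<Longrightarrow> Q j \<in> carrier_mat L d \<and> V.rank (Q j) = d" and
    AE: "AE h in (\<Pi>\<^sub>M x\<in>chan_idx K L N. lborel). \<forall>i < K. \<not> desired_sub N L h Q i \<subseteq> interf_sub K N L h Q i"
    using ach unfolding achievable_def by blast
  obtain h where h: "\<And>i. i < K \<Longrightarrow> \<not> desired_sub N L h Q i \<subseteq> interf_sub K N L h Q i"
    using eventually_happens'[OF ae_filter_PiM_lborel_neq_bot[OF finite_chan_idx] AE] by blast
  have "dim_col (Q 0) + K - 1 \<le> L"
  proof (rule V.private_directions_dim_bound[OF K])
    fix k assume k: "k < K"
    obtain u where u: "u \<in> set (cols (Q k))"
      and out: "u \<notin> V.span (\<Union>j\<in>{j. j < K \<and> j \<noteq> k}. set (cols (Q j)))"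
      by (rule escape_imp_private_column[OF _ k h[OF k]]) (use Q in blast)
    have "dim_row (Q k) = L"
      using Q[OF k] by auto
    then have "set (cols (Q k)) \<subseteq> carrier_vec L"
      using cols_dim[of "Q k"] by simp
    then have "u \<in> V.span (set (cols (Q k)))"
      using V.in_own_span u by blast
    with out show "\<exists>u \<in> V.span (set (cols (Q k))). u \<notin> V.span (\<Union>j\<in>{j. j < K \<and> j \<noteq> k}. set (cols (Q j)))"
      by blast
  next
    show "dim_row (Q j) = L" if "j < K" for j
      using Q[OF that] by auto
    show "V.rank (Q 0) = dim_col (Q 0)"
      using Q[OF K] by auto
  qed
  then show ?thesis
    using Q[OF K] by auto
qed

definition staggered_precoder :: "nat \<Rightarrow> nat \<Rightarrow> nat \<Rightarrow> 'a::zero_neq_one mat" where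
  "staggered_precoder K L j = mat_of_cols L (map (unit_vec L) ([0..<L - K] @ [L - K + j]))"

lemma staggered_precoder_carrier: "staggered_precoder K L j \<in> carrier_mat L (L - K + 1)"
  unfolding staggered_precoder_def
  using mat_of_cols_carrier(1)[of L "map (unit_vec L) ([0..<L - K] @ [L - K + j])"] by simp

lemma cols_staggered_precoder:
  "cols (staggered_precoder K L j) = map (unit_vec L) ([0..<L - K] @ [L - K + j])"
  unfolding staggered_precoder_def by (rule cols_mat_of_cols) auto

lemma rank_staggered_precoder:
  assumes "j < K" "K \<le> L"
  shows "vec_space.rank L (staggered_precoder K L j :: 'a::field mat) = L - K + 1"
proof -
  interpret V: vec_space "TYPE('a)" L .
  have idx: "set ([0..<L - K] @ [L - K + j]) \<subseteq> {..<L}"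
    using assms by auto
  have "inj_on (unit_vec L :: nat \<Rightarrow> 'a vec) {..<L}"
    by (intro inj_onI) auto
  then have "distinct (cols (staggered_precoder K L j :: 'a mat))"
    using idx unfolding cols_staggered_precoder
    by (auto simp: distinct_map intro: inj_on_subset)
  moreover have "V.lin_indpt (set (cols (staggered_precoder K L j :: 'a mat)))"
  proof (rule V.subset_li_is_li)
    show "V.lin_indpt (set (unit_vecs L))"
      using V.unit_vecs_basis unfolding V.basis_def by auto
    show "set (cols (staggered_precoder K L j :: 'a mat)) \<subseteq> set (unit_vecs L)"
      using idx unfolding cols_staggered_precoder unit_vecs_def by auto
  qed
  ultimately show ?thesis
    by (rule V.lin_indpt_full_rank[OF staggered_precoder_carrier])
qed

lemma set_cols_chan_mat_mult_staggered_precoder: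
  "set (cols (chan_mat N L h i * staggered_precoder K L j)) =
    (\<lambda>t. chan_mat N L h i *\<^sub>v unit_vec L t) ` set ([0..<L - K] @ [L - K + j])"
  unfolding set_cols_mult[OF chan_mat_carrier staggered_precoder_carrier] cols_staggered_precoder
  by (simp add: image_image)

text \<open>Channel use L - K + i is private to receiver i, so its first antenna, in row
  N (L - K + i), sees no interference.\<close>

lemma interf_sub_staggered_precoder_coordinate_zero:
  assumes N: "0 < N" and i: "i < K" and KL: "K \<le> L"
  shows "interf_sub K N L h (staggered_precoder K L) i
    \<subseteq> {w \<in> carrier_vec (N * L). w $ (N * (L - K + i)) = 0}"
proof -
  interpret W: vec_space "TYPE(complex)" "N * L" .
  let ?r = "N * (L - K + i)"
  have r: "?r < N * L"
    using N i KL by simp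
  show ?thesis
    unfolding interf_sub_def
  proof (rule W.span_subset_coordinate_zero[OF r], safe)
    fix j x assume j: "j < K" "j \<noteq> i" and "x \<in> set (cols (chan_mat N L h i * staggered_precoder K L j))"
    then obtain t where t: "t \<in> set ([0..<L - K] @ [L - K + j])" and x: "x = chan_mat N L h i *\<^sub>v unit_vec L t"
      unfolding set_cols_chan_mat_mult_staggered_precoder by blast
    have "t < L" "t \<noteq> L - K + i"
      using t j KL by auto
    show "x \<in> carrier_vec (N * L)"
      unfolding x by simp
    show "x $ ?r = 0"
      unfolding x chan_mat_mult_unit_vec_index[OF \<open>t < L\<close> r] using \<open>t \<noteq> L - K + i\<close> N by simp
  qed
qed

lemma staggered_precoder_escapes:
  assumes N: "0 < N" and i: "i < K" and KL: "K \<le> L" and h: "h (i, L - K + i, 0) \<noteq> 0"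
  shows "\<not> desired_sub N L h (staggered_precoder K L) i \<subseteq> interf_sub K N L h (staggered_precoder K L) i"
proof
  interpret W: vec_space "TYPE(complex)" "N * L" .
  let ?HQ = "chan_mat N L h i * staggered_precoder K L i"
  let ?r = "N * (L - K + i)"
  let ?v = "chan_mat N L h i *\<^sub>v unit_vec L (L - K + i)"
  assume sub: "desired_sub N L h (staggered_precoder K L) i \<subseteq> interf_sub K N L h (staggered_precoder K L) i"
  have r: "?r < N * L"
    using N i KL by simp
  have "?v \<in> set (cols ?HQ)"
    unfolding set_cols_chan_mat_mult_staggered_precoder by simp
  then have "?v \<in> desired_sub N L h (staggered_precoder K L) i"
    unfolding desired_sub_def W.col_space_def using W.in_own_span[of "set (cols ?HQ)"] cols_dim[of ?HQ] by auto
  then have "?v $ ?r = 0"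
    using sub interf_sub_staggered_precoder_coordinate_zero[OF N i KL] by blast
  moreover have "?v $ ?r = h (i, L - K + i, 0)"
    using chan_mat_mult_unit_vec_index[OF _ r] i KL N by simp
  ultimately show False
    using h by simp
qed

lemma achievable_staggered_precoder:
  assumes N: "0 < N" and KL: "K \<le> L"
  shows "achievable K N L (L - K + 1)"
  unfolding achievable_def
proof (intro exI conjI allI impI)
  fix j assume "j < K"
  then show "staggered_precoder K L j \<in> carrier_mat L (L - K + 1)"
    "vec_space.rank L (staggered_precoder K L j :: complex mat) = L - K + 1"
    using staggered_precoder_carrier rank_staggered_precoder KL by auto
next
  have "AE h in (\<Pi>\<^sub>M x\<in>chan_idx K L N. (lborel :: complex measure)). \<forall>x\<in>chan_idx K L N. h x \<noteq> 0"
    by (intro AE_finite_allI finite_chan_idx AE_PiM_lborel_coordinate_neq)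
  then show "AE h in (\<Pi>\<^sub>M x\<in>chan_idx K L N. lborel). \<forall>i<K.
      \<not> desired_sub N L h (staggered_precoder K L) i \<subseteq> interf_sub K N L h (staggered_precoder K L) i"
  proof (rule AE_mp, intro AE_I2 impI allI)
    fix h :: "nat \<times> nat \<times> nat \<Rightarrow> complex" and i
    assume "\<forall>x\<in>chan_idx K L N. h x \<noteq> 0" "i < K"
    then show "\<not> desired_sub N L h (staggered_precoder K L) i \<subseteq> interf_sub K N L h (staggered_precoder K L) i"
      using staggered_precoder_escapes[OF N _ KL] KL N by (auto simp: chan_idx_def)
  qed
qed

theorem corollary2:
  fixes K L N :: nat
  assumes "0 < K" and "0 < L" and "0 < N" and "K \<le> L"
  shows "(real L - real K + 1) / real L \<in> {real d / real L | d. achievable K N L d} \<and>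
         (\<forall>x \<in> {real d / real L | d. achievable K N L d}. x \<le> (real L - real K + 1) / real L)"
proof -
  have eq: "real L - real K + 1 = real (L - K + 1)"
    using assms(4) by (simp add: of_nat_diff)
  have "achievable K N L (L - K + 1)"
    using achievable_staggered_precoder assms by simp
  moreover have "real d / real L \<le> real (L - K + 1) / real L" if "achievable K N L d" for d
  proof -
    have "d \<le> L - K + 1"
      using achievable_imp_le[OF assms(1) that] assms(1) by linarith
    then show ?thesis
      by (intro divide_right_mono) auto
  qed
  ultimately show ?thesis
    unfolding eq by blast
qed

end
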